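(* Let $\mathbf u\approx\mathbf v$ be an identity that holds in the variety $\mathbf F\vee\mathbf E$. Then either $\mathbf O\{\mathbf u\approx\mathbf v\}=\mathbf O\{\mathbf u'\approx\mathbf v'\}$ or $\mathbf O\{\mathbf u\approx\mathbf v\}=\mathbf O\{\mathbf u'\approx\mathbf v',\ xyxztx\approx xyxzxtx\}$ for some well-balanced identity $\mathbf u'\approx\mathbf v'$.
   Context: Words are elements of the free monoid over a countably infinite alphabet. Monoid varieties: $\mathbf O$ is defined by $x^2y^2\approx y^2x^2$ and $xzxyxty\approx xzyxty$; $\mathbf E$ is defined by $x^2y^2\approx y^2x^2$, $x^2\approx x^3$, $yx^2\approx xyx$; $\mathbf F$ is defined by $xyx\approx xyx^2$, $x^2y^2\approx y^2x^2$, $xyzxy\approx yxzxy$, $x^2y\approx x^2yx$; $\mathbf F\vee\mathbf E$ is their join. For a set of identities $\Sigma$, $\mathbf O\{\Sigma\}$ denotes the subvariety of $\mathbf O$ defined within $\mathbf O$ by $\Sigma$. A letter is simple in a word if it occurs once there. If the simple letters of $\mathbf w$ are $t_1,\dots,t_m$ in order of occurrence, then $\mathbf w=t_0\mathbf w_0t_1\mathbf w_1\cdots t_m\mathbf w_m$ with $t_0$ the empty word and $\mathbf w_i$ possibly empty words without simple letters of $\mathbf w$; this is the decomposition of $\mathbf w$, the $\mathbf w_i$ are its blocks. An identity $\mathbf u\approx\mathbf v$ is well-balanced if the decompositions have the forms $\mathbf u=t_0\mathbf u_0t_1\mathbf u_1\cdots t_m\mathbf u_m$ and $\mathbf v=t_0\mathbf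 v_0t_1\mathbf v_1\cdots t_m\mathbf v_m$ with the same dividers $t_1,\dots,t_m$ in the same order, and for every letter $x$ and every $i$, the number of occurrences of $x$ in $\mathbf u_i$ equals that in $\mathbf v_i$. *)

theory Defs
  imports "HOL-Library.Multiset"
begin

text \<open>Words over the countably infinite alphabet nat; the identity u = v is the pair (u, v).\<close>
type_synonym word = "nat list"
type_synonym identity = "word \<times> word"

definition subst :: "(nat \<Rightarrow> word) \<Rightarrow> word \<Rightarrow> word" where
  "subst \<sigma> w = concat (map \<sigma> w)"

text \<open>By Birkhoff's completeness theorem, (u,v) is in eq_theory S iff u = v holds in
  the monoid variety defined by S.\<close>
inductive_set eq_theory :: "identity set \<Rightarrow> identity set" for S where
  ax: "p \<in> S \<Longrightarrow> p \<in> eq_theory S"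
| refl: "(w, w) \<in> eq_theory S"
| sym: "(u, v) \<in> eq_theory S \<Longrightarrow> (v, u) \<in> eq_theory S"
| trans: "(u, v) \<in> eq_theory S \<Longrightarrow> (v, w) \<in> eq_theory S \<Longrightarrow> (u, w) \<in> eq_theory S"
| subst: "(u, v) \<in> eq_theory S \<Longrightarrow> (subst \<sigma> u, subst \<sigma> v) \<in> eq_theory S"
| mult: "(u, v) \<in> eq_theory S \<Longrightarrow> (a @ u @ b, a @ v @ b) \<in> eq_theory S"

text \<open>Letters: x = 0, y = 1, z = 2, t = 3.\<close>
definition O_ids :: "identity set" where
  "O_ids = {([0,0,1,1], [1,1,0,0]), ([0,2,0,1,0,3,1], [0,2,1,0,3,1])}"

definition E_ids :: "identity set" where
  "E_ids = {([0,0,1,1], [1,1,0,0]), ([0,0], [0,0,0]), ([1,0,0], [0,1,0])}"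

definition F_ids :: "identity set" where
  "F_ids = {([0,1,0], [0,1,0,0]), ([0,0,1,1], [1,1,0,0]),
            ([0,1,2,0,1], [1,0,2,0,1]), ([0,0,1], [0,0,1,0])}"

text \<open>An identity holds in the join F \<or> E iff it holds in both F and E.\<close>
definition holds_in_FE :: "identity \<Rightarrow> bool" where
  "holds_in_FE p \<longleftrightarrow> p \<in> eq_theory F_ids \<and> p \<in> eq_theory E_ids"

definition extra_id :: identity where
  "extra_id = ([0,1,0,2,3,0], [0,1,0,2,0,3,0])"

text \<open>O{Sigma} is represented by its equational theory eq_theory (O_ids \<union> Sigma); two
  subvarieties are equal iff their equational theories coincide.\<close>
definition O_sub :: "identity set \<Rightarrow> identity set" where
  "O_sub \<Sigma> = eq_theory (O_ids \<union> \<Sigma>)"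

fun split_at_pred :: "('a \<Rightarrow> bool) \<Rightarrow> 'a list \<Rightarrow> 'a list list" where
  "split_at_pred P [] = [[]]"
| "split_at_pred P (x # xs) =
     (let r = split_at_pred P xs in if P x then [] # r else (x # hd r) # tl r)"

definition simple_letters :: "word \<Rightarrow> nat list" where
  "simple_letters w = filter (\<lambda>x. count_list w x = 1) w"

definition blocks :: "word \<Rightarrow> word list" where
  "blocks w = split_at_pred (\<lambda>x. count_list w x = 1) w"

definition well_balanced :: "word \<Rightarrow> word \<Rightarrow> bool" where
  "well_balanced u v \<longleftrightarrow> simple_letters u = simple_letters v \<and>
     list_all2 (\<lambda>a b. mset a = mset b) (blocks u) (blocks v)"

end

(*
  Both F and E preserve the number of occurrences of each letter up to 2; E also preserves
  which letters occur after a simple letter, and F how often, up to 2, each letter occurs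
  before a simple letter.  Hence the two sides of an identity of F \<or> E have the same simple
  letters in the same order, and at every cut between blocks each letter occurs before the cut
  equally often up to 2, and after the cut on both sides or on neither.

  If a block on one side contains a letter x that the corresponding block on the other side
  lacks, then x occurs at least twice before and once after that block on both sides.  Keeping
  only x and the two simple letters around the block turns u = v into x^a z x^b t x^c =
  x^a' z t x^c' with a, a' >= 2 and b, c, c' >= 1, which modulo O is xxzxtx = xxztx and yields
  xyxztx = xyxzxtx.  That identity inserts x into the deficient block; afterwards O alone adds
  copies of a letter to a block already containing it whenever the letter also occurs earlier
  or twice in the block, and these moves make both sides equivalent to a well-balanced pair.
*)
theory Submission
  imports Defs
begin

lemma subst_Nil [simp]: "subst s [] = []"
  by (simp add: subst_def)

lemma subst_Cons [simp]: "subst s (x # w) = s x @ subst s w"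
  by (simp add: subst_def)

lemma subst_append [simp]: "subst s (u @ w) = subst s u @ subst s w"
  by (simp add: subst_def)

lemma subst_subst: "subst s (subst t w) = subst (\<lambda>x. subst s (t x)) w"
  by (induction w) auto

lemma subst_singleton [simp]: "subst (\<lambda>x. [x]) w = w"
  by (induction w) auto

lemma eq_theory_subset:
  assumes "S \<subseteq> eq_theory T"
  shows "eq_theory S \<subseteq> eq_theory T"
proof
  fix p assume "p \<in> eq_theory S"
  then show "p \<in> eq_theory T"
  proof (induction p rule: eq_theory.induct)
    case (ax p)
    then show ?case using assms by blast
  next
    case (refl w)
    show ?case by (rule eq_theory.refl)
  qed (auto intro: eq_theory.sym eq_theory.trans eq_theory.subst eq_theory.mult)
qed

lemma eq_theory_mono: "S \<subseteq> T \<Longrightarrow> eq_theory S \<subseteq> eq_theory T"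
  by (rule eq_theory_subset) (auto intro: eq_theory.ax)

lemma eq_theory_instance:
  "(p, q) \<in> S \<Longrightarrow> (a @ subst s p @ b, a @ subst s q @ b) \<in> eq_theory S"
  by (intro eq_theory.mult eq_theory.subst eq_theory.ax)

lemma eq_theory_trans_sym:
  "(u, u') \<in> eq_theory S \<Longrightarrow> (v, v') \<in> eq_theory S \<Longrightarrow> (u', v') \<in> eq_theory S
   \<Longrightarrow> (u, v) \<in> eq_theory S"
  by (meson eq_theory.sym eq_theory.trans)

lemma eq_theory_invariant:
  assumes "(u, v) \<in> eq_theory S"
    and preserved: "\<And>p q s. (p, q) \<in> S \<Longrightarrow> \<phi> (subst s p) = \<phi> (subst s q)"
    and cong: "\<And>u v a b. \<phi> u = \<phi> v \<Longrightarrow> \<phi> (a @ u @ b) = \<phi> (a @ v @ b)"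
  shows "\<phi> u = \<phi> v"
proof -
  have "\<forall>s. \<phi> (subst s (fst p)) = \<phi> (subst s (snd p))" if "p \<in> eq_theory S" for p
    using that
  proof (induction p rule: eq_theory.induct)
    case (ax p)
    then show ?case by (cases p) (simp add: preserved)
  next
    case (subst u v \<sigma>)
    then show ?case by (simp add: subst_subst)
  next
    case (mult u v a b)
    then show ?case using cong[of "subst _ u" "subst _ v"] by simp
  qed simp_all
  from this[OF assms(1)] show ?thesis
    by (metis fst_conv snd_conv subst_singleton)
qed

section \<open>Invariants of E and F\<close>

primrec after :: "'a list \<Rightarrow> 'a \<Rightarrow> 'a \<Rightarrow> bool" where
  "after [] a b \<longleftrightarrow> False"
| "after (c # w) a b \<longleftrightarrow> c = a \<and> b \<in> set w \<or> after w a b"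

lemma after_append: "after (p @ q) a b \<longleftrightarrow> after p a b \<or> a \<in> set p \<and> b \<in> set q \<or> after q a b"
  by (induction p) auto

lemma after_in_set: "after w a b \<Longrightarrow> a \<in> set w \<and> b \<in> set w"
  by (induction w) auto

lemma after_filter: "P a \<Longrightarrow> P b \<Longrightarrow> after (filter P w) a b \<longleftrightarrow> after w a b"
  by (induction w) auto

lemma after_divider: "t \<notin> set p \<Longrightarrow> t \<notin> set q \<Longrightarrow> after (p @ t # q) t x \<longleftrightarrow> x \<in> set q"
  by (auto simp: after_append dest: after_in_set)

lemma distinct_eq_if_after_eq:
  assumes "distinct xs" "distinct ys" "set xs = set ys"
    and "\<And>a b. a \<in> set xs \<Longrightarrow> b \<in> set xs \<Longrightarrow> after xs a b \<longleftrightarrow> after ys a b"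
  shows "xs = ys"
  using assms
proof (induction xs arbitrary: ys)
  case Nil
  then show ?case by simp
next
  case (Cons a xs)
  then obtain b ys' where ys: "ys = b # ys'" by (cases ys) auto
  have "a = b"
  proof (rule ccontr)
    assume "a \<noteq> b"
    then have "after ys b a"
      using Cons.prems(3) ys by auto
    then have "after (a # xs) b a"
      using Cons.prems(3,4) ys by auto
    then have "after xs b a"
      using \<open>a \<noteq> b\<close> by simp
    then show False
      using Cons.prems(1) after_in_set by fastforce
  qed
  moreover have "xs = ys'"
  proof (rule Cons.IH)
    show "distinct xs" "distinct ys'" "set xs = set ys'"
      using Cons.prems(1-3) ys \<open>a = b\<close> by auto
    show "after xs c d \<longleftrightarrow> after ys' c d" if "c \<in> set xs" "d \<in> set xs" for c d
      using Cons.prems(1) Cons.prems(4)[of c d] that ys \<open>a = b\<close> by auto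
  qed
  ultimately show ?case using ys by simp
qed

definition E_invariant :: "'a list \<Rightarrow> ('a \<Rightarrow> nat) \<times> ('a \<Rightarrow> 'a \<Rightarrow> bool)" where
  "E_invariant w = (\<lambda>x. min 2 (count_list w x), \<lambda>a b. count_list w a = 1 \<and> after w a b)"

definition F_invariant :: "'a list \<Rightarrow> ('a \<Rightarrow> nat) \<times> ('a \<Rightarrow> 'a \<Rightarrow> nat)" where
  "F_invariant w = (\<lambda>x. min 2 (count_list w x),
     \<lambda>t x. if count_list w t = 1 then min 2 (count_list (takeWhile (\<lambda>c. c \<noteq> t) w) x) else 0)"

lemma set_eq_if_min2_count_eq:
  assumes "\<And>x. min 2 (count_list u x) = min 2 (count_list v x)"
  shows "set u = set v"
proof -
  have "x \<in> set u \<longleftrightarrow> x \<in> set v" for x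
    using assms[of x] count_list_0_iff[of u x] count_list_0_iff[of v x] by linarith
  then show ?thesis by blast
qed

lemma min2_count_append_cong:
  assumes "\<And>x. min 2 (count_list u x) = min 2 (count_list v x)"
  shows "min 2 (count_list (a @ u @ b) x) = min 2 (count_list (a @ v @ b) x)"
    and "count_list (a @ u @ b) x = 1 \<longleftrightarrow> count_list (a @ v @ b) x = 1"
  using assms[of x] by auto

lemma E_invariant_cong:
  assumes "E_invariant u = E_invariant v"
  shows "E_invariant (a @ u @ b) = E_invariant (a @ v @ b)"
proof -
  have cnt: "min 2 (count_list u x) = min 2 (count_list v x)" for x
    using assms by (simp add: E_invariant_def fun_eq_iff)
  have simple_after: "count_list u c = 1 \<and> after u c d \<longleftrightarrow> count_list v c = 1 \<and> after v c d"
    for c d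
    using assms by (simp add: E_invariant_def fun_eq_iff)
  have set_eq: "set u = set v"
    using cnt by (rule set_eq_if_min2_count_eq)
  have "after u c d \<longleftrightarrow> after v c d" if "count_list u c \<le> 1" for c d
  proof (cases "count_list u c = 1")
    case True
    then show ?thesis using simple_after[of c d] cnt[of c] by auto
  next
    case False
    then have "c \<notin> set u" using that count_list_0_iff by fastforce
    then show ?thesis using set_eq after_in_set by metis
  qed
  then have "count_list (a @ u @ b) c = 1 \<and> after (a @ u @ b) c d \<longleftrightarrow>
             count_list (a @ v @ b) c = 1 \<and> after (a @ v @ b) c d" for c d
  proof (cases "count_list (a @ u @ b) c = 1")
    case True
    then have "after u c d \<longleftrightarrow> after v c d"
      using \<open>\<And>c d. count_list u c \<le> 1 \<Longrightarrow> after u c d \<longleftrightarrow> after v c d\<close> by simp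
    then show ?thesis
      using True min2_count_append_cong(2)[OF cnt, of a b c] set_eq by (simp add: after_append)
  next
    case False
    then show ?thesis using min2_count_append_cong(2)[OF cnt, of a b c] by simp
  qed
  then show ?thesis
    using min2_count_append_cong(1)[OF cnt] by (simp add: E_invariant_def fun_eq_iff)
qed

lemma takeWhile_neq_append_in:
  "t \<in> set p \<Longrightarrow> takeWhile (\<lambda>c. c \<noteq> t) (p @ q) = takeWhile (\<lambda>c. c \<noteq> t) p"
  by (rule takeWhile_append1) auto

lemma takeWhile_neq_append_notin:
  "t \<notin> set p \<Longrightarrow> takeWhile (\<lambda>c. c \<noteq> t) (p @ q) = p @ takeWhile (\<lambda>c. c \<noteq> t) q"
  by (rule takeWhile_append2) auto

lemma F_invariant_cong:
  assumes "F_invariant u = F_invariant v"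
  shows "F_invariant (a @ u @ b) = F_invariant (a @ v @ b)"
proof -
  have cnt: "min 2 (count_list u x) = min 2 (count_list v x)" for x
    using assms by (simp add: F_invariant_def fun_eq_iff)
  have before: "(if count_list u t = 1 then min 2 (count_list (takeWhile (\<lambda>c. c \<noteq> t) u) x) else 0)
     = (if count_list v t = 1 then min 2 (count_list (takeWhile (\<lambda>c. c \<noteq> t) v) x) else 0)" for t x
    using assms by (simp add: F_invariant_def fun_eq_iff)
  have set_eq: "set u = set v"
    using cnt by (rule set_eq_if_min2_count_eq)
  have "min 2 (count_list (takeWhile (\<lambda>c. c \<noteq> t) (a @ u @ b)) x) =
        min 2 (count_list (takeWhile (\<lambda>c. c \<noteq> t) (a @ v @ b)) x)"
    if simple: "count_list (a @ u @ b) t = 1" for t x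
  proof -
    consider "t \<in> set a" | "t \<notin> set a" "t \<in> set u" | "t \<notin> set a" "t \<notin> set u"
      by blast
    then show ?thesis
    proof cases
      case 1
      then show ?thesis by (simp add: takeWhile_neq_append_in)
    next
      case 2
      then have "count_list u t = 1"
        using simple count_list_0_iff[of a t] count_list_0_iff[of u t] by simp
      moreover have "count_list v t = 1"
        using cnt[of t] calculation by simp
      ultimately show ?thesis
        using 2 set_eq before[of t x]
        by (simp add: takeWhile_neq_append_in takeWhile_neq_append_notin)
    next
      case 3
      then have "t \<notin> set v" using set_eq by simp
      then show ?thesis
        using 3 cnt[of x] by (simp add: takeWhile_neq_append_notin)
    qed
  qed
  then show ?thesis
    using min2_count_append_cong[OF cnt] by (simp add: F_invariant_def fun_eq_iff)
qed

lemma E_invariant_instance: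
  assumes "(p, q) \<in> E_ids"
  shows "E_invariant (subst s p) = E_invariant (subst s q)"
proof -
  from assms consider "p = [0,0,1,1]" "q = [1,1,0,0]" | "p = [0,0]" "q = [0,0,0]"
    | "p = [1,0,0]" "q = [0,1,0]"
    unfolding E_ids_def by auto
  then show ?thesis
  proof cases
    case 1
    then show ?thesis unfolding E_invariant_def by (auto simp: fun_eq_iff) arith+
  next
    case 2
    then show ?thesis unfolding E_invariant_def by (auto simp: fun_eq_iff) arith+
  next
    case 3
    have "count_list (s 1 @ s 0 @ s 0) c = 1 \<and> after (s 1 @ s 0 @ s 0) c d \<longleftrightarrow>
          count_list (s 0 @ s 1 @ s 0) c = 1 \<and> after (s 0 @ s 1 @ s 0) c d" for c d
    proof (cases "c \<in> set (s 0)")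
      case True
      then have "count_list (s 0) c \<noteq> 0" by (simp add: count_list_0_iff)
      then show ?thesis by auto
    next
      case False
      then show ?thesis by (auto simp: after_append dest: after_in_set)
    qed
    then show ?thesis using 3 unfolding E_invariant_def by (auto simp: fun_eq_iff add_ac)
  qed
qed

lemma F_invariant_instance:
  assumes "(p, q) \<in> F_ids"
  shows "F_invariant (subst s p) = F_invariant (subst s q)"
proof -
  from assms consider "p = [0,1,0]" "q = [0,1,0,0]" | "p = [0,0,1,1]" "q = [1,1,0,0]"
    | "p = [0,1,2,0,1]" "q = [1,0,2,0,1]" | "p = [0,0,1]" "q = [0,0,1,0]"
    unfolding F_ids_def by auto
  then show ?thesis
  proof cases
    case 1
    have "min 2 (count_list (takeWhile (\<lambda>c. c \<noteq> t) (s 0 @ s 1 @ s 0)) x) =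
          min 2 (count_list (takeWhile (\<lambda>c. c \<noteq> t) (s 0 @ s 1 @ s 0 @ s 0)) x)"
      if "count_list (s 0 @ s 1 @ s 0) t = 1" for t x
    proof -
      have "t \<notin> set (s 0)" "t \<in> set (s 1)"
        using that count_list_0_iff[of "s 0" t] count_list_0_iff[of "s 1" t] by auto
      then show ?thesis by (simp add: takeWhile_neq_append_notin takeWhile_neq_append_in)
    qed
    then show ?thesis using 1 unfolding F_invariant_def by (auto simp: fun_eq_iff)
  next
    case 2
    then show ?thesis unfolding F_invariant_def by (auto simp: fun_eq_iff) arith+
  next
    case 3
    have "min 2 (count_list (takeWhile (\<lambda>c. c \<noteq> t) (s 0 @ s 1 @ s 2 @ s 0 @ s 1)) x) =
          min 2 (count_list (takeWhile (\<lambda>c. c \<noteq> t) (s 1 @ s 0 @ s 2 @ s 0 @ s 1)) x)"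
      if "count_list (s 0 @ s 1 @ s 2 @ s 0 @ s 1) t = 1" for t x
    proof -
      have "t \<notin> set (s 0)" "t \<notin> set (s 1)" "t \<in> set (s 2)"
        using that count_list_0_iff[of "s 0" t] count_list_0_iff[of "s 1" t]
          count_list_0_iff[of "s 2" t] by auto
      then show ?thesis by (simp add: takeWhile_neq_append_notin takeWhile_neq_append_in add_ac)
    qed
    then show ?thesis using 3 unfolding F_invariant_def by (auto simp: fun_eq_iff add_ac)
  next
    case 4
    have "min 2 (count_list (takeWhile (\<lambda>c. c \<noteq> t) (s 0 @ s 0 @ s 1)) x) =
          min 2 (count_list (takeWhile (\<lambda>c. c \<noteq> t) (s 0 @ s 0 @ s 1 @ s 0)) x)"
      if "count_list (s 0 @ s 0 @ s 1) t = 1" for t x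
    proof -
      have "t \<notin> set (s 0)" "t \<in> set (s 1)"
        using that count_list_0_iff[of "s 0" t] count_list_0_iff[of "s 1" t] by auto
      then show ?thesis by (simp add: takeWhile_neq_append_notin takeWhile_neq_append_in)
    qed
    then show ?thesis using 4 unfolding F_invariant_def by (auto simp: fun_eq_iff)
  qed
qed

lemma holds_in_FE_invariants:
  assumes "holds_in_FE (u, v)"
  shows "E_invariant u = E_invariant v" "F_invariant u = F_invariant v"
  using assms unfolding holds_in_FE_def
  by (auto intro: eq_theory_invariant E_invariant_instance E_invariant_cong
      F_invariant_instance F_invariant_cong)

lemma
  assumes "holds_in_FE (u, v)"
  shows holds_in_FE_min2_count: "min 2 (count_list u x) = min 2 (count_list v x)"
    and holds_in_FE_after: "count_list u t = 1 \<Longrightarrow> after u t x \<longleftrightarrow> after v t x"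
    and holds_in_FE_before:
      "count_list u t = 1 \<Longrightarrow> min 2 (count_list (takeWhile (\<lambda>c. c \<noteq> t) u) x) =
                              min 2 (count_list (takeWhile (\<lambda>c. c \<noteq> t) v) x)"
proof -
  note E = holds_in_FE_invariants(1)[OF assms] and F = holds_in_FE_invariants(2)[OF assms]
  show cnt: "min 2 (count_list u x) = min 2 (count_list v x)" for x
    using E by (simp add: E_invariant_def fun_eq_iff)
  assume simple: "count_list u t = 1"
  then have "count_list v t = 1"
    using cnt[of t] by simp
  then show "after u t x \<longleftrightarrow> after v t x"
    using arg_cong[OF E, of "\<lambda>p. snd p t x"] simple by (simp add: E_invariant_def)
  show "min 2 (count_list (takeWhile (\<lambda>c. c \<noteq> t) u) x) =
        min 2 (count_list (takeWhile (\<lambda>c. c \<noteq> t) v) x)"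
    using arg_cong[OF F, of "\<lambda>p. snd p t x"] simple \<open>count_list v t = 1\<close>
    by (simp add: F_invariant_def)
qed

lemma distinct_simple_letters: "distinct (simple_letters w)"
  unfolding simple_letters_def
  by (auto simp: distinct_count_atmost_1 count_mset count_list_0_iff[symmetric])

lemma simple_letters_eq_if_holds_in_FE:
  assumes "holds_in_FE (u, v)"
  shows "simple_letters u = simple_letters v"
proof (rule distinct_eq_if_after_eq)
  have simple_iff: "count_list u x = 1 \<longleftrightarrow> count_list v x = 1" for x
    using holds_in_FE_min2_count[OF assms, of x] by linarith
  then have filter_eq: "simple_letters v = filter (\<lambda>x. count_list u x = 1) v"
    unfolding simple_letters_def by simp
  show "set (simple_letters u) = set (simple_letters v)"
    using set_eq_if_min2_count_eq[OF holds_in_FE_min2_count[OF assms]]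
    unfolding filter_eq by (simp add: simple_letters_def)
  show "after (simple_letters u) a b \<longleftrightarrow> after (simple_letters v) a b"
    if "a \<in> set (simple_letters u)" "b \<in> set (simple_letters u)" for a b
    using that holds_in_FE_after[OF assms] unfolding filter_eq
    by (simp add: simple_letters_def after_filter)
qed (rule distinct_simple_letters)+

section \<open>Decompositions into blocks\<close>

fun join_blocks :: "'a list \<Rightarrow> 'a list list \<Rightarrow> 'a list" where
  "join_blocks [] [] = []"
| "join_blocks [] (b # bs) = b"
| "join_blocks (t # ts) [] = []"
| "join_blocks (t # ts) (b # bs) = b @ t # join_blocks ts bs"

lemma join_blocks_Cons_block: "join_blocks ts ((x # b) # bs) = x # join_blocks ts (b # bs)"
  by (cases ts) auto

lemma split_at_pred_not_Nil [simp]: "split_at_pred P w \<noteq> []"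
  by (induction w) (auto simp: Let_def)

lemma length_split_at_pred: "length (split_at_pred P w) = Suc (length (filter P w))"
  by (induction w) (auto simp: Let_def)

lemma split_at_pred_not_P: "B \<in> set (split_at_pred P w) \<Longrightarrow> z \<in> set B \<Longrightarrow> \<not> P z"
proof (induction w arbitrary: B)
  case (Cons x xs)
  then show ?case
    by (cases "split_at_pred P xs") (fastforce simp: Let_def split: if_splits)+
qed simp

lemma join_blocks_split_at_pred: "join_blocks (filter P w) (split_at_pred P w) = w"
proof (induction w)
  case (Cons x xs)
  then show ?case
    by (cases "split_at_pred P xs") (auto simp: Let_def join_blocks_Cons_block)
qed simp

lemma split_at_pred_append_not_P:
  "\<forall>z\<in>set B. \<not> P z \<Longrightarrow>
   split_at_pred P (B @ w) = (B @ hd (split_at_pred P w)) # tl (split_at_pred P w)"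
  by (induction B) (auto simp: Let_def)

lemma split_at_pred_join_blocks:
  assumes "length bs = Suc (length ts)" "\<forall>t\<in>set ts. P t" "\<forall>B\<in>set bs. \<forall>z\<in>set B. \<not> P z"
  shows "split_at_pred P (join_blocks ts bs) = bs"
  using assms
proof (induction ts arbitrary: bs)
  case Nil
  then obtain b where "bs = [b]" by (cases bs) auto
  then show ?case using Nil split_at_pred_append_not_P[of b P "[]"] by simp
next
  case (Cons t ts)
  then obtain b bs' where bs: "bs = b # bs'" by (cases bs) auto
  then have "split_at_pred P (join_blocks ts bs') = bs'"
    using Cons by auto
  then show ?case
    using Cons.prems bs split_at_pred_append_not_P[of b P "t # join_blocks ts bs'"]
    by (simp add: Let_def)
qed

lemma filter_join_blocks:
  assumes "length bs = Suc (length ts)" "\<forall>t\<in>set ts. P t" "\<forall>B\<in>set bs. \<forall>z\<in>set B. \<not> P z"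
  shows "filter P (join_blocks ts bs) = ts"
  using assms
proof (induction ts arbitrary: bs)
  case Nil
  then obtain b where "bs = [b]" by (cases bs) auto
  then show ?case using Nil by (auto simp: filter_empty_conv)
next
  case (Cons t ts)
  then obtain b bs' where bs: "bs = b # bs'" by (cases bs) auto
  then have "filter P b = []" using Cons.prems by (auto simp: filter_empty_conv)
  then show ?case using Cons bs by auto
qed

lemma count_list_join_blocks:
  "length bs = Suc (length ts) \<Longrightarrow>
   count_list (join_blocks ts bs) x = count_list (concat bs) x + count_list ts x"
proof (induction ts arbitrary: bs)
  case Nil
  then show ?case by (cases bs) auto
next
  case (Cons t ts)
  then show ?case by (cases bs) auto
qed

lemma join_blocks_update:
  assumes "length bs = Suc (length ts)" "i < length bs"
  shows "\<exists>pre post. (\<forall>B. join_blocks ts (bs[i := B]) = pre @ B @ post) \<and> (i = 0 \<longrightarrow> pre = []) \<and>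
    (0 < i \<longrightarrow> (\<exists>X. pre = X @ [ts ! (i - 1)] \<and>
                     mset X = mset (concat (take i bs)) + mset (take (i - 1) ts))) \<and>
    (i < length ts \<longrightarrow> (\<exists>Y. post = ts ! i # Y \<and>
                     mset Y = mset (concat (drop (Suc i) bs)) + mset (drop (Suc i) ts)))"
  using assms
proof (induction ts arbitrary: bs i)
  case Nil
  then obtain b where "bs = [b]" "i = 0" by (cases bs) auto
  then show ?case by (intro exI[of _ "[]"]) auto
next
  case (Cons t ts)
  then obtain b bs' where bs: "bs = b # bs'" and len: "length bs' = Suc (length ts)"
    by (cases bs) auto
  show ?case
  proof (cases i)
    case 0
    have "mset (join_blocks ts bs') = mset (concat bs') + mset ts"
      using count_list_join_blocks[OF len] by (simp add: multiset_eq_iff count_mset)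
    then show ?thesis using bs 0
      by (intro exI[of _ "[]"] exI[of _ "t # join_blocks ts bs'"]) auto
  next
    case (Suc j)
    then have "j < length bs'" using Cons.prems bs by simp
    then obtain pre post where IH: "\<forall>B. join_blocks ts (bs'[j := B]) = pre @ B @ post"
      "j = 0 \<longrightarrow> pre = []"
      "0 < j \<longrightarrow> (\<exists>X. pre = X @ [ts ! (j - 1)] \<and>
                     mset X = mset (concat (take j bs')) + mset (take (j - 1) ts))"
      "j < length ts \<longrightarrow> (\<exists>Y. post = ts ! j # Y \<and>
                     mset Y = mset (concat (drop (Suc j) bs')) + mset (drop (Suc j) ts))"
      using Cons.IH[OF len] by blast
    have "\<exists>X. b @ t # pre = X @ [(t # ts) ! (i - 1)] \<and>
              mset X = mset (concat (take i bs)) + mset (take (i - 1) (t # ts))"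
    proof (cases j)
      case 0
      then show ?thesis using IH(2) bs Suc by (intro exI[of _ b]) auto
    next
      case (Suc k)
      then obtain X where "pre = X @ [ts ! (j - 1)]"
        "mset X = mset (concat (take j bs')) + mset (take (j - 1) ts)"
        using IH(3) by auto
      then show ?thesis using bs Suc \<open>i = Suc j\<close> by (intro exI[of _ "b @ t # X"]) auto
    qed
    note X = this
    show ?thesis
      by (rule exI[of _ "b @ t # pre"], rule exI[of _ post]) (use X IH(1,4) bs Suc in auto)
  qed
qed

definition decomposition :: "'a list \<Rightarrow> 'a list list \<Rightarrow> bool" where
  "decomposition ts bs \<longleftrightarrow> length bs = Suc (length ts) \<and> distinct ts \<and>
     (\<forall>B\<in>set bs. \<forall>z\<in>set B. z \<notin> set ts \<and> 2 \<le> count_list (concat bs) z)"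

lemma decomposition_length: "decomposition ts bs \<Longrightarrow> length bs = Suc (length ts)"
  by (simp add: decomposition_def)

lemma decomposition_block_letter:
  "decomposition ts bs \<Longrightarrow> z \<in> set (concat bs) \<Longrightarrow> z \<notin> set ts"
  by (auto simp: decomposition_def)

lemma decomposition_simple_letters_blocks:
  assumes "decomposition ts bs"
  shows "simple_letters (join_blocks ts bs) = ts" "blocks (join_blocks ts bs) = bs"
proof -
  let ?P = "\<lambda>x. count_list (join_blocks ts bs) x = 1"
  have len: "length bs = Suc (length ts)"
    using assms by (rule decomposition_length)
  have "\<forall>t\<in>set ts. ?P t"
  proof
    fix t assume t: "t \<in> set ts"
    then have "t \<notin> set (concat bs)"
      using decomposition_block_letter[OF assms] by blast
    then show "?P t"
      using t assms count_list_join_blocks[OF len, of t]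
      by (simp add: decomposition_def distinct_count_atmost_1 count_mset)
  qed
  moreover have "\<forall>B\<in>set bs. \<forall>z\<in>set B. \<not> ?P z"
    using assms count_list_join_blocks[OF len] by (fastforce simp: decomposition_def)
  ultimately show "simple_letters (join_blocks ts bs) = ts" "blocks (join_blocks ts bs) = bs"
    unfolding simple_letters_def blocks_def
    using filter_join_blocks[OF len] split_at_pred_join_blocks[OF len] by auto
qed

lemma decomposition_of_word:
  "decomposition (simple_letters w) (blocks w)"
  "join_blocks (simple_letters w) (blocks w) = w"
proof -
  let ?P = "\<lambda>x. count_list w x = 1"
  show join: "join_blocks (simple_letters w) (blocks w) = w"
    unfolding simple_letters_def blocks_def by (rule join_blocks_split_at_pred)
  have len: "length (blocks w) = Suc (length (simple_letters w))"
    unfolding simple_letters_def blocks_def by (rule length_split_at_pred)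
  have "z \<notin> set (simple_letters w) \<and> 2 \<le> count_list (concat (blocks w)) z"
    if "B \<in> set (blocks w)" "z \<in> set B" for B z
  proof -
    have "\<not> ?P z"
      using split_at_pred_not_P[of B ?P w z] that by (simp add: blocks_def)
    then have z: "z \<notin> set (simple_letters w)"
      by (simp add: simple_letters_def)
    have "count_list w z = count_list (concat (blocks w)) z"
      using count_list_join_blocks[OF len, of z] z by (simp add: join)
    moreover have "z \<in> set (concat (blocks w))"
      using that by auto
    ultimately show ?thesis
      using z \<open>\<not> ?P z\<close> count_list_0_iff[of "concat (blocks w)" z] by simp
  qed
  then show "decomposition (simple_letters w) (blocks w)"
    using len distinct_simple_letters by (auto simp: decomposition_def)
qed

lemma well_balanced_join_blocks:
  assumes "decomposition ts bu" "decomposition ts bv"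
    and "\<forall>i<length bu. mset (bu ! i) = mset (bv ! i)"
  shows "well_balanced (join_blocks ts bu) (join_blocks ts bv)"
  using assms decomposition_simple_letters_blocks[OF assms(1)]
    decomposition_simple_letters_blocks[OF assms(2)]
  unfolding well_balanced_def by (auto simp: list_all2_conv_all_nth decomposition_def)

section \<open>Block data preserved by F \<or> E\<close>

definition prefix_count :: "'a list list \<Rightarrow> nat \<Rightarrow> 'a \<Rightarrow> nat" where
  "prefix_count bs k x = count_list (concat (take k bs)) x"

lemma prefix_count_0 [simp]: "prefix_count bs 0 x = 0"
  by (simp add: prefix_count_def)

lemma prefix_count_Suc:
  "i < length bs \<Longrightarrow> prefix_count bs (Suc i) x = prefix_count bs i x + count_list (bs ! i) x"
  by (simp add: prefix_count_def take_Suc_conv_app_nth)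

lemma prefix_count_length [simp]: "length bs \<le> k \<Longrightarrow> prefix_count bs k x = count_list (concat bs) x"
  by (simp add: prefix_count_def)

lemma prefix_count_mono: "j \<le> k \<Longrightarrow> prefix_count bs j x \<le> prefix_count bs k x"
  unfolding prefix_count_def by (metis concat_append count_list_append le_add1 le_add_diff_inverse take_add)

lemma count_concat_eq_prefix_count_plus:
  "count_list (concat bs) x = prefix_count bs k x + count_list (concat (drop k bs)) x"
  unfolding prefix_count_def by (metis append_take_drop_id concat_append count_list_append)

lemma in_concat_drop_iff: "x \<in> set (concat (drop k bs)) \<longleftrightarrow> prefix_count bs k x < count_list (concat bs) x"
  using count_concat_eq_prefix_count_plus[of bs x k] count_list_0_iff[of "concat (drop k bs)" x]
  by auto

lemma join_blocks_cut:
  assumes dec: "decomposition ts bs" and k: "0 < k" "k \<le> length ts"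
  obtains X R where "join_blocks ts bs = X @ ts ! (k - 1) # R"
    and "ts ! (k - 1) \<notin> set X" "ts ! (k - 1) \<notin> set R"
    and "\<And>x. x \<notin> set ts \<Longrightarrow> count_list X x = prefix_count bs k x"
    and "\<And>x. x \<notin> set ts \<Longrightarrow> x \<in> set R \<longleftrightarrow> x \<in> set (concat (drop k bs))"
proof -
  let ?t = "ts ! (k - 1)"
  have len: "length bs = Suc (length ts)" and kbs: "k < length bs" and "distinct ts"
    using dec k by (auto simp: decomposition_def)
  obtain pre post where P: "\<forall>B. join_blocks ts (bs[k := B]) = pre @ B @ post"
    "0 < k \<longrightarrow> (\<exists>X. pre = X @ [?t] \<and> mset X = mset (concat (take k bs)) + mset (take (k - 1) ts))"
    using join_blocks_update[OF len kbs] by blast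
  then obtain X where X: "pre = X @ [?t]" "mset X = mset (concat (take k bs)) + mset (take (k - 1) ts)"
    using k by blast
  have count_X: "count_list X x = prefix_count bs k x + count_list (take (k - 1) ts) x" for x
    using arg_cong[OF X(2), of "\<lambda>M. count M x"] by (simp add: count_mset prefix_count_def)
  define R where "R = bs ! k @ post"
  have join: "join_blocks ts bs = X @ ?t # R"
    using P(1) X(1) by (metis R_def append.assoc append_Cons append_Nil list_update_id)
  have "?t \<in> set ts"
    using k by simp
  then have t: "?t \<in> set ts" "?t \<notin> set (concat bs)"
    using decomposition_block_letter[OF dec] by blast+
  have "count_list (join_blocks ts bs) ?t = 1"
    using count_list_join_blocks[OF len, of ?t] t \<open>distinct ts\<close>
    by (simp add: distinct_count_atmost_1 count_mset)
  moreover have "count_list (concat (take k bs)) ?t = 0"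
    using t(2) by (auto simp: count_list_0_iff dest: in_set_takeD)
  ultimately have "count_list X ?t = 0" "count_list R ?t = 0"
    using count_X[of ?t] by (simp_all add: join prefix_count_def)
  then have "?t \<notin> set X" "?t \<notin> set R"
    by (simp_all add: count_list_0_iff)
  moreover have "count_list X x = prefix_count bs k x" if "x \<notin> set ts" for x
    using count_X[of x] that by (auto simp: count_list_0_iff dest: in_set_takeD)
  moreover have "x \<in> set R \<longleftrightarrow> x \<in> set (concat (drop k bs))" if "x \<notin> set ts" for x
  proof -
    have "?t \<noteq> x"
      using that t(1) by blast
    then have "count_list (concat bs) x = count_list X x + count_list R x"
      using count_list_join_blocks[OF len, of x] that by (simp add: join)
    then have "count_list (concat (drop k bs)) x = count_list R x"
      using calculation(3)[OF that] count_concat_eq_prefix_count_plus[of bs x k] by simp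
    then show ?thesis
      by (metis count_list_0_iff)
  qed
  ultimately show thesis using that join by blast
qed

definition FE_related :: "'a list list \<Rightarrow> 'a list list \<Rightarrow> bool" where
  "FE_related bu bv \<longleftrightarrow> length bu = length bv \<and> (\<forall>x k. k \<le> length bu \<longrightarrow>
     min 2 (prefix_count bu k x) = min 2 (prefix_count bv k x) \<and>
     (x \<in> set (concat (drop k bu)) \<longleftrightarrow> x \<in> set (concat (drop k bv))))"

lemma FE_related_sym: "FE_related bu bv \<Longrightarrow> FE_related bv bu"
  unfolding FE_related_def by metis

lemma FE_related_D:
  assumes "FE_related bu bv" "k \<le> length bu"
  shows "min 2 (prefix_count bu k x) = min 2 (prefix_count bv k x)"
    and "x \<in> set (concat (drop k bu)) \<longleftrightarrow> x \<in> set (concat (drop k bv))"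
  using assms unfolding FE_related_def by blast+

lemma join_blocks_divider:
  assumes "decomposition ts bs" "0 < k" "k \<le> length ts" "x \<notin> set ts"
  shows "count_list (takeWhile (\<lambda>c. c \<noteq> ts ! (k - 1)) (join_blocks ts bs)) x = prefix_count bs k x"
    and "after (join_blocks ts bs) (ts ! (k - 1)) x \<longleftrightarrow> x \<in> set (concat (drop k bs))"
proof -
  obtain X R where "join_blocks ts bs = X @ ts ! (k - 1) # R"
    "ts ! (k - 1) \<notin> set X" "ts ! (k - 1) \<notin> set R"
    "count_list X x = prefix_count bs k x" "x \<in> set R \<longleftrightarrow> x \<in> set (concat (drop k bs))"
    using join_blocks_cut[OF assms(1-3)] assms(4) by metis
  then show "count_list (takeWhile (\<lambda>c. c \<noteq> ts ! (k - 1)) (join_blocks ts bs)) x = prefix_count bs k x"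
    and "after (join_blocks ts bs) (ts ! (k - 1)) x \<longleftrightarrow> x \<in> set (concat (drop k bs))"
    by (simp_all add: takeWhile_neq_append_notin after_divider)
qed

lemma decomposition_divider_notin_blocks:
  assumes "decomposition ts bs" "x \<in> set ts"
  shows "prefix_count bs k x = 0" "x \<notin> set (concat (drop k bs))"
proof -
  have "x \<notin> set (concat bs)"
    using decomposition_block_letter[OF assms(1)] assms(2) by blast
  then have "x \<notin> set (concat (take k bs))" "x \<notin> set (concat (drop k bs))"
    by (auto dest: in_set_takeD in_set_dropD)
  then show "prefix_count bs k x = 0" "x \<notin> set (concat (drop k bs))"
    by (simp_all add: prefix_count_def)
qed

lemma FE_related_if_holds_in_FE:
  assumes FE: "holds_in_FE (join_blocks ts bu, join_blocks ts bv)"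
    and du: "decomposition ts bu" and dv: "decomposition ts bv"
  shows "FE_related bu bv"
proof -
  let ?u = "join_blocks ts bu" and ?v = "join_blocks ts bv"
  have len: "length bu = Suc (length ts)" "length bv = Suc (length ts)"
    using du dv by (simp_all add: decomposition_length)
  have "min 2 (prefix_count bu k x) = min 2 (prefix_count bv k x) \<and>
        (x \<in> set (concat (drop k bu)) \<longleftrightarrow> x \<in> set (concat (drop k bv)))"
    if k: "k \<le> Suc (length ts)" for k x
  proof (cases "x \<in> set ts")
    case True
    then show ?thesis
      using decomposition_divider_notin_blocks[OF du True, of k]
        decomposition_divider_notin_blocks[OF dv True, of k] by simp
  next
    case False
    have count: "count_list (concat bu) x = count_list ?u x" "count_list (concat bv) x = count_list ?v x"
      using count_list_join_blocks[OF len(1), of x] count_list_join_blocks[OF len(2), of x] False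
      by simp_all
    consider "k = 0" | "k = Suc (length ts)" | "0 < k" "k \<le> length ts"
      using k by linarith
    then show ?thesis
    proof cases
      case 1
      then show ?thesis
        using holds_in_FE_min2_count[OF FE, of x] count
          count_list_0_iff[of "concat bu" x] count_list_0_iff[of "concat bv" x] by auto
    next
      case 2
      then show ?thesis
        using holds_in_FE_min2_count[OF FE, of x] count len by simp
    next
      case 3
      then have "ts ! (k - 1) \<in> set (simple_letters ?u)"
        using decomposition_simple_letters_blocks(1)[OF du] by simp
      then have simple: "count_list ?u (ts ! (k - 1)) = 1"
        by (simp add: simple_letters_def)
      show ?thesis
        using holds_in_FE_before[OF FE simple, of x] holds_in_FE_after[OF FE simple, of x]
          join_blocks_divider[OF du 3 False] join_blocks_divider[OF dv 3 False] by simp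
    qed
  qed
  then show ?thesis
    unfolding FE_related_def using len by auto
qed

lemma FE_related_content_diff:
  assumes rel: "FE_related bu bv" and i: "i < length bu"
    and xu: "x \<in> set (bu ! i)" and xv: "x \<notin> set (bv ! i)"
  shows "2 \<le> prefix_count bu i x" "2 \<le> prefix_count bv i x"
    and "x \<in> set (concat (drop (Suc i) bu))" "x \<in> set (concat (drop (Suc i) bv))"
proof -
  have iv: "i < length bv"
    using rel i by (simp add: FE_related_def)
  have "prefix_count bu (Suc i) x = prefix_count bu i x + count_list (bu ! i) x"
    "prefix_count bv (Suc i) x = prefix_count bv i x"
    using prefix_count_Suc[OF i] prefix_count_Suc[OF iv] xv by (simp_all add: count_list_0_iff)
  moreover have "1 \<le> count_list (bu ! i) x"
    using xu count_list_0_iff[of "bu ! i" x] by simp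
  ultimately show "2 \<le> prefix_count bu i x" "2 \<le> prefix_count bv i x"
    using FE_related_D(1)[OF rel, of i x] FE_related_D(1)[OF rel, of "Suc i" x] i by auto
  have "x \<in> set (concat (drop i bu))"
    using xu i by (auto simp: Cons_nth_drop_Suc[symmetric])
  then have "x \<in> set (concat (drop i bv))"
    using FE_related_D(2)[OF rel] i by simp
  then show "x \<in> set (concat (drop (Suc i) bv))"
    using xv iv by (simp add: Cons_nth_drop_Suc[symmetric])
  then show "x \<in> set (concat (drop (Suc i) bu))"
    using FE_related_D(2)[OF rel, of "Suc i"] i by simp
qed

section \<open>Consequences of O\<close>

lemma O_ids_collapse:
  assumes "O_ids \<subseteq> S"
  shows "(P @ y # Z @ y # y # T, P @ y # Z @ y # T) \<in> eq_theory S"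
proof -
  let ?s = "\<lambda>n::nat. if n = 0 then [y] else if n = 1 then [] else if n = 2 then Z else T"
  have "([0,2,0,1,0,3,1], [0,2,1,0,3,1]) \<in> O_ids"
    by (simp add: O_ids_def)
  then have "(P @ subst ?s [0,2,0,1,0,3,1] @ [], P @ subst ?s [0,2,1,0,3,1] @ []) \<in> eq_theory O_ids"
    by (rule eq_theory_instance)
  then show ?thesis
    using eq_theory_mono[OF assms] by auto
qed

lemma O_ids_collapse_power:
  assumes "O_ids \<subseteq> S" "2 \<le> a"
  shows "(replicate a y @ W, [y, y] @ W) \<in> eq_theory S"
  using assms(2)
proof (induction a rule: dec_induct)
  case base
  then show ?case by (simp add: numeral_2_eq_2 eq_theory.refl)
next
  case (step a)
  then obtain k where "a = Suc (Suc k)"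
    using step.hyps(1) by (metis add_2_eq_Suc le_Suc_ex)
  then have "(replicate (Suc a) y @ W, replicate a y @ W) \<in> eq_theory S"
    using O_ids_collapse[OF assms(1), of "[]" y "[]" "replicate k y @ W"] by simp
  then show ?case using step.IH by (rule eq_theory.trans)
qed

lemma O_ids_collapse_repeat:
  assumes "O_ids \<subseteq> S" "y \<in> set P" "1 \<le> b"
  shows "(P @ replicate b y @ W, P @ [y] @ W) \<in> eq_theory S"
  using assms(3)
proof (induction b rule: dec_induct)
  case base
  then show ?case by (simp add: eq_theory.refl)
next
  case (step b)
  obtain P1 Z where "P = P1 @ y # Z"
    using assms(2) by (meson split_list)
  moreover obtain k where "b = Suc k"
    using step.hyps(1) by (cases b) auto
  ultimately have "(P @ replicate (Suc b) y @ W, P @ replicate b y @ W) \<in> eq_theory S"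
    using O_ids_collapse[OF assms(1), of P1 y Z "replicate k y @ W"] by simp
  then show ?case using step.IH by (rule eq_theory.trans)
qed

lemma O_ids_normalize_powers:
  assumes "O_ids \<subseteq> S" "2 \<le> a" "1 \<le> c"
  shows "1 \<le> b \<Longrightarrow>
      (replicate a 0 @ 2 # replicate b 0 @ 3 # replicate c 0, [0,0,2,0,3,0]) \<in> eq_theory S"
    and "(replicate a 0 @ 2 # 3 # replicate c 0, [0,0,2,3,0]) \<in> eq_theory S"
proof -
  have head: "(replicate a 0 @ 2 # W, [0,0] @ 2 # W) \<in> eq_theory S" for W
    by (rule O_ids_collapse_power[OF assms(1,2)])
  have tail: "([0,0,2] @ W @ replicate c 0, [0,0,2] @ W @ [0]) \<in> eq_theory S" for W
    using O_ids_collapse_repeat[OF assms(1) _ assms(3), where P = "[0,0,2] @ W" and y = 0 and W = "[]"]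
    by simp
  show "(replicate a 0 @ 2 # replicate b 0 @ 3 # replicate c 0, [0,0,2,0,3,0]) \<in> eq_theory S"
    if "1 \<le> b"
  proof -
    have "([0,0,2] @ replicate b 0 @ 3 # replicate c 0, [0,0,2] @ [0] @ 3 # replicate c 0)
        \<in> eq_theory S"
      using O_ids_collapse_repeat[OF assms(1) _ that, where P = "[0,0,2]" and y = 0] by simp
    then show ?thesis
      using head[of "replicate b 0 @ 3 # replicate c 0"] tail[of "[0,3]"]
      by (auto intro: eq_theory.trans)
  qed
  show "(replicate a 0 @ 2 # 3 # replicate c 0, [0,0,2,3,0]) \<in> eq_theory S"
    using head[of "3 # replicate c 0"] tail[of "[3]"] by (auto intro: eq_theory.trans)
qed

lemma extra_id_from_xxzxtx:
  assumes "O_ids \<subseteq> S" "([0,0,2,0,3,0], [0,0,2,3,0]) \<in> eq_theory S"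
  shows "extra_id \<in> eq_theory S"
proof -
  \<comment> \<open>xyxztx = xyxxxztx by O; substituting xz for z in xxztx = xxzxtx and multiplying by xy
    on the left gives xyxxxztx = xyxxxzxtx; O collapses the right-hand side to xyxzxtx.\<close>
  let ?s = "\<lambda>n::nat. if n = 2 then [0,2] else [n]"
  have "([0,1] @ replicate 3 0 @ [2,3,0], [0,1] @ [0] @ [2,3,0]) \<in> eq_theory S"
    by (rule O_ids_collapse_repeat[OF assms(1)]) auto
  then have "([0,1,0,2,3,0], [0,1,0,0,0,2,3,0]) \<in> eq_theory S"
    by (simp add: numeral_3_eq_3 eq_theory.sym)
  moreover have "([0,1] @ subst ?s [0,0,2,0,3,0] @ [], [0,1] @ subst ?s [0,0,2,3,0] @ [])
      \<in> eq_theory S"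
    using assms(2) by (intro eq_theory.mult eq_theory.subst)
  then have "([0,1,0,0,0,2,3,0], [0,1,0,0,0,2,0,3,0]) \<in> eq_theory S"
    by (simp add: eq_theory.sym)
  moreover have "([0,1] @ replicate 3 0 @ [2,0,3,0], [0,1] @ [0] @ [2,0,3,0]) \<in> eq_theory S"
    by (rule O_ids_collapse_repeat[OF assms(1)]) auto
  then have "([0,1,0,0,0,2,0,3,0], [0,1,0,2,0,3,0]) \<in> eq_theory S"
    by (simp add: numeral_3_eq_3)
  ultimately show ?thesis
    unfolding extra_id_def by (meson eq_theory.trans)
qed

section \<open>A letter missing from a block forces xyxztx = xyxzxtx\<close>

lemma subst_erasing:
  assumes "\<And>y. y \<in> set W \<Longrightarrow> s y = (if y = x then [a] else [])"
  shows "subst s W = replicate (count_list W x) a"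
  using assms by (induction W) auto

lemma distinct_nth_notin_take_drop:
  assumes "distinct ts" "k < length ts"
  shows "j \<le> k \<Longrightarrow> ts ! k \<notin> set (take j ts)" "k < l \<Longrightarrow> ts ! k \<notin> set (drop l ts)"
  using assms by (auto simp: in_set_conv_nth nth_eq_iff_index_eq)

lemma join_blocks_around_block:
  assumes dec: "decomposition ts bs" and i: "0 < i" "i < length ts"
  obtains X Y where "\<And>B. join_blocks ts (bs[i := B]) = X @ ts ! (i - 1) # B @ ts ! i # Y"
    and "set X \<subseteq> set (concat bs) \<union> set (take (i - 1) ts)"
    and "set Y \<subseteq> set (concat bs) \<union> set (drop (Suc i) ts)"
    and "\<And>x. x \<notin> set ts \<Longrightarrow> count_list X x = prefix_count bs i x"
    and "\<And>x. x \<notin> set ts \<Longrightarrow> count_list Y x = count_list (concat (drop (Suc i) bs)) x"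
proof -
  have len: "length bs = Suc (length ts)" and ibs: "i < length bs"
    using dec i by (auto simp: decomposition_def)
  obtain pre post where P: "\<forall>B. join_blocks ts (bs[i := B]) = pre @ B @ post"
    "0 < i \<longrightarrow> (\<exists>X. pre = X @ [ts ! (i - 1)] \<and>
                     mset X = mset (concat (take i bs)) + mset (take (i - 1) ts))"
    "i < length ts \<longrightarrow> (\<exists>Y. post = ts ! i # Y \<and>
                     mset Y = mset (concat (drop (Suc i) bs)) + mset (drop (Suc i) ts))"
    using join_blocks_update[OF len ibs] by blast
  obtain X where X: "pre = X @ [ts ! (i - 1)]"
    "mset X = mset (concat (take i bs)) + mset (take (i - 1) ts)"
    using P(2) i by blast
  obtain Y where Y: "post = ts ! i # Y"
    "mset Y = mset (concat (drop (Suc i) bs)) + mset (drop (Suc i) ts)"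
    using P(3) i by blast
  have "join_blocks ts (bs[i := B]) = X @ ts ! (i - 1) # B @ ts ! i # Y" for B
    using P(1) X(1) Y(1) by simp
  moreover have "set X \<subseteq> set (concat bs) \<union> set (take (i - 1) ts)"
    "set Y \<subseteq> set (concat bs) \<union> set (drop (Suc i) ts)"
    using arg_cong[OF X(2), of set_mset] arg_cong[OF Y(2), of set_mset]
    by (auto dest: in_set_takeD in_set_dropD)
  moreover have "count_list X x = prefix_count bs i x"
    "count_list Y x = count_list (concat (drop (Suc i) bs)) x" if "x \<notin> set ts" for x
  proof -
    have "x \<notin> set (take (i - 1) ts)" "x \<notin> set (drop (Suc i) ts)"
      using that by (auto dest: in_set_takeD in_set_dropD)
    then show "count_list X x = prefix_count bs i x"
      "count_list Y x = count_list (concat (drop (Suc i) bs)) x"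
      using arg_cong[OF X(2), of "\<lambda>M. count M x"] arg_cong[OF Y(2), of "\<lambda>M. count M x"]
      by (simp_all add: count_mset prefix_count_def)
  qed
  ultimately show thesis
    using that by blast
qed

lemma subst_join_blocks_around_block:
  assumes dec: "decomposition ts bs" and i: "0 < i" "i < length ts" and x: "x \<notin> set ts"
  shows "subst (\<lambda>y. if y = x then [0] else if y = ts ! (i - 1) then [2] else if y = ts ! i then [3] else [])
      (join_blocks ts bs) = replicate (prefix_count bs i x) 0 @ 2 #
      replicate (count_list (bs ! i) x) 0 @ 3 # replicate (count_list (concat (drop (Suc i) bs)) x) 0"
    (is "subst ?s _ = _")
proof -
  let ?t1 = "ts ! (i - 1)" and ?t2 = "ts ! i"
  have dist: "distinct ts"
    using dec by (simp add: decomposition_def)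
  have t: "?t1 \<in> set ts" "?t2 \<in> set ts" "?t1 \<noteq> ?t2"
    using i dist by (auto simp: nth_eq_iff_index_eq)
  have t_notin: "?t1 \<notin> set (take (i - 1) ts)" "?t2 \<notin> set (take (i - 1) ts)"
    "?t1 \<notin> set (drop (Suc i) ts)" "?t2 \<notin> set (drop (Suc i) ts)"
    using distinct_nth_notin_take_drop[OF dist, of "i - 1"] distinct_nth_notin_take_drop[OF dist, of i]
      i by auto
  obtain X Y where XY: "\<And>B. join_blocks ts (bs[i := B]) = X @ ?t1 # B @ ?t2 # Y"
    "set X \<subseteq> set (concat bs) \<union> set (take (i - 1) ts)"
    "set Y \<subseteq> set (concat bs) \<union> set (drop (Suc i) ts)"
    "count_list X x = prefix_count bs i x"
    "count_list Y x = count_list (concat (drop (Suc i) bs)) x"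
    using join_blocks_around_block[OF dec i] x by metis
  have "i < length bs"
    using dec i by (simp add: decomposition_def)
  then have "set (bs ! i) \<subseteq> set (concat bs)"
    using nth_mem by fastforce
  then have "y \<noteq> ?t1 \<and> y \<noteq> ?t2" if "y \<in> set X \<union> set (bs ! i) \<union> set Y" for y
  proof -
    have "y \<in> set (concat bs) \<or> y \<in> set (take (i - 1) ts) \<union> set (drop (Suc i) ts)"
      using that XY(2,3) \<open>set (bs ! i) \<subseteq> set (concat bs)\<close> by blast
    then show ?thesis
      using t t_notin decomposition_block_letter[OF dec] by blast
  qed
  then have "subst ?s W = replicate (count_list W x) 0" if "W \<in> {X, bs ! i, Y}" for W
    using that by (intro subst_erasing) auto
  moreover have "x \<noteq> ?t1" "x \<noteq> ?t2"
    using x t by auto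
  ultimately show ?thesis
    using XY(1)[of "bs ! i"] XY(4,5) t(3) by simp
qed

lemma xxzxtx_from_content_diff:
  assumes du: "decomposition ts bu" and dv: "decomposition ts bv" and rel: "FE_related bu bv"
    and i: "i < length bu" and xu: "x \<in> set (bu ! i)" and xv: "x \<notin> set (bv ! i)"
  shows "([0,0,2,0,3,0], [0,0,2,3,0]) \<in> O_sub {(join_blocks ts bu, join_blocks ts bv)}"
proof -
  note diff = FE_related_content_diff[OF rel i xu xv]
  have i0: "0 < i"
    using diff(1) by (cases i) auto
  have its: "i < length ts"
    using diff(3) decomposition_length[OF du] by (cases "Suc i < length bu") auto
  have "x \<in> set (concat bu)"
    using xu i by auto
  then have x: "x \<notin> set ts"
    by (rule decomposition_block_letter[OF du])
  let ?s = "\<lambda>y. if y = x then [0] else if y = ts ! (i - 1) then [2] else if y = ts ! i then [3] else []"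
  let ?S = "O_ids \<union> {(join_blocks ts bu, join_blocks ts bv)}"
  have "(subst ?s (join_blocks ts bu), subst ?s (join_blocks ts bv)) \<in> eq_theory ?S"
    using eq_theory_instance[of "join_blocks ts bu" "join_blocks ts bv" ?S "[]" ?s "[]"] by simp
  moreover have "(subst ?s (join_blocks ts bu), [0,0,2,0,3,0]) \<in> eq_theory ?S"
    unfolding subst_join_blocks_around_block[OF du i0 its x]
    using diff xu count_list_0_iff[of "bu ! i" x] count_list_0_iff[of "concat (drop (Suc i) bu)" x]
    by (intro O_ids_normalize_powers(1)) auto
  moreover have "(subst ?s (join_blocks ts bv), [0,0,2,3,0]) \<in> eq_theory ?S"
    unfolding subst_join_blocks_around_block[OF dv i0 its x]
    using diff xv count_list_0_iff[of "concat (drop (Suc i) bv)" x]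
    by (simp, intro O_ids_normalize_powers(2)) auto
  ultimately show ?thesis
    unfolding O_sub_def by (meson eq_theory.sym eq_theory.trans)
qed

definition content_diffs :: "'a list list \<Rightarrow> 'a list list \<Rightarrow> (nat \<times> 'a) set" where
  "content_diffs bu bv = {(i, x). i < length bu \<and> (x \<in> set (bu ! i)) \<noteq> (x \<in> set (bv ! i))}"

lemma finite_content_diffs: "finite (content_diffs bu bv)"
proof (rule finite_subset)
  show "content_diffs bu bv \<subseteq> (SIGMA i:{..<length bu}. set (bu ! i) \<union> set (bv ! i))"
    by (auto simp: content_diffs_def)
qed auto

lemma content_diffs_sym: "length bu = length bv \<Longrightarrow> content_diffs bv bu = content_diffs bu bv"
  by (auto simp: content_diffs_def)

lemma content_diffs_insert:
  "i < length bv \<Longrightarrow> x \<in> set (bu ! i) \<Longrightarrow> x \<notin> set (bv ! i) \<Longrightarrow>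
   content_diffs bu (bv[i := x # bv ! i]) = content_diffs bu bv - {(i, x)}"
  by (auto simp: content_diffs_def nth_list_update split: if_splits)

lemma extra_id_if_content_diff:
  assumes du: "decomposition ts bu" and dv: "decomposition ts bv" and rel: "FE_related bu bv"
    and "content_diffs bu bv \<noteq> {}"
  shows "extra_id \<in> O_sub {(join_blocks ts bu, join_blocks ts bv)}"
proof -
  obtain i x where i: "i < length bu" and diff: "(x \<in> set (bu ! i)) \<noteq> (x \<in> set (bv ! i))"
    using assms(4) by (auto simp: content_diffs_def)
  let ?u = "join_blocks ts bu" and ?v = "join_blocks ts bv"
  have "([0,0,2,0,3,0], [0,0,2,3,0]) \<in> O_sub {(?u, ?v)}"
  proof (cases "x \<in> set (bu ! i)")
    case True
    then show ?thesis
      using xxzxtx_from_content_diff[OF du dv rel i] diff by simp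
  next
    case False
    have "i < length bv"
      using rel i by (simp add: FE_related_def)
    then have "([0,0,2,0,3,0], [0,0,2,3,0]) \<in> O_sub {(?v, ?u)}"
      using xxzxtx_from_content_diff[OF dv du FE_related_sym[OF rel]] diff False by simp
    moreover have "O_sub {(?v, ?u)} \<subseteq> O_sub {(?u, ?v)}"
      unfolding O_sub_def
      by (rule eq_theory_subset) (auto intro: eq_theory.ax eq_theory.sym)
    ultimately show ?thesis by blast
  qed
  then show ?thesis
    unfolding O_sub_def by (rule extra_id_from_xxzxtx[rotated]) blast
qed

section \<open>Equalizing the blocks\<close>

lemma count_list_eq_if_mset_eq_add:
  "mset B = mset A + replicate_mset k x \<Longrightarrow> count_list B z = count_list A z + (if z = x then k else 0)"
  by (drule arg_cong[of _ _ "\<lambda>M. count M z"]) (simp add: count_mset)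

lemma count_concat_update:
  assumes "i < length bs" "mset B = mset (bs ! i) + replicate_mset k x"
  shows "count_list (concat (bs[i := B])) z = count_list (concat bs) z + (if z = x then k else 0)"
proof -
  have "bs = take i bs @ bs ! i # drop (Suc i) bs"
    using assms(1) by (rule id_take_nth_drop)
  then have "count_list (concat bs) z = count_list (concat (take i bs)) z + count_list (bs ! i) z
      + count_list (concat (drop (Suc i) bs)) z"
    by (metis concat.simps(2) concat_append count_list_append add.assoc)
  then show ?thesis
    using assms count_list_eq_if_mset_eq_add[OF assms(2), of z] by (simp add: upd_conv_take_nth_drop)
qed

lemma prefix_count_update:
  assumes "i < length bs" "mset B = mset (bs ! i) + replicate_mset k x"
  shows "prefix_count (bs[i := B]) j z = prefix_count bs j z + (if i < j \<and> z = x then k else 0)"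
proof (cases "i < j")
  case True
  then have "i < length (take j bs)" "(take j bs) ! i = bs ! i"
    using assms(1) by simp_all
  then show ?thesis
    using True count_concat_update[of i "take j bs" B k x z] assms(2)
    by (simp add: prefix_count_def take_update_swap)
next
  case False
  then show ?thesis by (simp add: prefix_count_def)
qed

lemma set_concat_update: "i < length bs \<Longrightarrow> set (concat (bs[i := B])) \<subseteq> set (concat bs) \<union> set B"
  by (auto simp: upd_conv_take_nth_drop dest: in_set_takeD in_set_dropD)

lemma decomposition_update:
  assumes dec: "decomposition ts bs" and i: "i < length bs" and x: "x \<in> set (concat bs)"
    and B: "mset B = mset (bs ! i) + replicate_mset k x"
  shows "decomposition ts (bs[i := B])"
proof -
  have "set B \<subseteq> set (bs ! i) \<union> {x}"
    using arg_cong[OF B, of set_mset] by (cases k) auto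
  moreover have "set (bs ! i) \<subseteq> set (concat bs)"
    using nth_mem[OF i] by auto
  ultimately have sub: "set (concat (bs[i := B])) \<subseteq> set (concat bs)"
    using set_concat_update[OF i, of B] x by blast
  have "z \<notin> set ts \<and> 2 \<le> count_list (concat (bs[i := B])) z"
    if "z \<in> set (concat (bs[i := B]))" for z
  proof -
    have "z \<notin> set ts \<and> 2 \<le> count_list (concat bs) z"
      using dec sub that by (auto simp: decomposition_def)
    then show ?thesis
      using count_concat_update[OF i B, of z] by simp
  qed
  then show ?thesis
    using dec unfolding decomposition_def by (metis UN_I length_list_update set_concat)
qed

lemma two_occurrences:
  assumes "2 \<le> count_list w x"
  shows "\<exists>P Y Z. w = P @ x # Y @ x # Z"
proof -
  obtain n where "count_list w x = Suc n" "1 \<le> n"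
    using assms by (metis Suc_1 Suc_le_D Suc_le_mono)
  then obtain P w' where "w = P @ x # w'" "count_list w' x = n"
    using count_list_Suc_split_first by metis
  moreover obtain Y Z where "w' = Y @ x # Z"
    using calculation(2) \<open>1 \<le> n\<close> count_list_0_iff[of w' x] by (metis not_one_le_zero split_list)
  ultimately show ?thesis by blast
qed

lemma extra_id_instance:
  assumes "extra_id \<in> eq_theory S"
  shows "(P @ x # Y @ x # Z @ T @ x # R, P @ x # Y @ x # Z @ x # T @ x # R) \<in> eq_theory S"
proof -
  let ?s = "\<lambda>n::nat. if n = 0 then [x] else if n = 1 then Y else if n = 2 then Z else T"
  have "(P @ subst ?s [0,1,0,2,3,0] @ R, P @ subst ?s [0,1,0,2,0,3,0] @ R) \<in> eq_theory S"
    using assms by (intro eq_theory.mult eq_theory.subst) (simp add: extra_id_def)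
  then show ?thesis by simp
qed

lemma extra_id_insert:
  assumes dec: "decomposition ts bs" and i: "i < length bs"
    and before: "2 \<le> prefix_count bs i x" and after: "x \<in> set (concat (drop (Suc i) bs))"
    and extra: "extra_id \<in> eq_theory S"
  shows "(join_blocks ts bs, join_blocks ts (bs[i := x # bs ! i])) \<in> eq_theory S"
proof -
  have i0: "0 < i"
    using before by (cases i) auto
  have its: "i < length ts"
    using after decomposition_length[OF dec] by (cases "Suc i < length bs") auto
  have x: "x \<notin> set ts"
    using after decomposition_block_letter[OF dec] by (auto dest: in_set_dropD)
  obtain X Y where XY: "\<And>B. join_blocks ts (bs[i := B]) = X @ ts ! (i - 1) # B @ ts ! i # Y"
    "count_list X x = prefix_count bs i x"
    "count_list Y x = count_list (concat (drop (Suc i) bs)) x"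
    using join_blocks_around_block[OF dec i0 its] x by metis
  obtain P Y0 Z where X: "X = P @ x # Y0 @ x # Z"
    using two_occurrences before XY(2) by metis
  obtain T R where Y: "Y = T @ x # R"
    using after XY(3) count_list_0_iff[of Y x] count_list_0_iff[of "concat (drop (Suc i) bs)" x]
    by (metis split_list)
  show ?thesis
    using XY(1)[of "bs ! i"] XY(1)[of "x # bs ! i"]
      extra_id_instance[OF extra, of P x Y0 "Z @ [ts ! (i - 1)]" "bs ! i @ ts ! i # T" R]
    unfolding X Y by simp
qed

definition O_duplicable :: "'a list list \<Rightarrow> nat \<Rightarrow> 'a \<Rightarrow> bool" where
  "O_duplicable bs i x \<longleftrightarrow> x \<in> set (bs ! i) \<and> (1 \<le> prefix_count bs i x \<or> 2 \<le> count_list (bs ! i) x)"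

lemma O_ids_insert:
  assumes len: "length bs = Suc (length ts)" and i: "i < length bs"
    and dup: "O_duplicable bs i x" and O: "O_ids \<subseteq> S"
  shows "\<exists>B. mset B = mset (bs ! i) + {#x#} \<and>
             (join_blocks ts bs, join_blocks ts (bs[i := B])) \<in> eq_theory S"
proof -
  obtain pre post where P: "\<forall>B. join_blocks ts (bs[i := B]) = pre @ B @ post"
    "0 < i \<longrightarrow> (\<exists>X. pre = X @ [ts ! (i - 1)] \<and>
                     mset X = mset (concat (take i bs)) + mset (take (i - 1) ts))"
    using join_blocks_update[OF len i] by blast
  have join: "join_blocks ts bs = pre @ bs ! i @ post"
    using P(1) by (metis list_update_id)
  show ?thesis
  proof (cases "2 \<le> count_list (bs ! i) x")
    case True
    then obtain P0 Y Z where B: "bs ! i = P0 @ x # Y @ x # Z"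
      using two_occurrences[OF True] by blast
    have "(join_blocks ts bs, join_blocks ts (bs[i := P0 @ x # Y @ x # x # Z])) \<in> eq_theory S"
      using eq_theory.sym[OF O_ids_collapse[OF O, of "pre @ P0" x Y "Z @ post"]] P(1) join B
      by simp
    then show ?thesis
      using B by (intro exI[of _ "P0 @ x # Y @ x # x # Z"]) simp
  next
    case False
    then have "1 \<le> prefix_count bs i x"
      using dup by (simp add: O_duplicable_def)
    then have "0 < i"
      by (cases i) auto
    then obtain X where X: "pre = X @ [ts ! (i - 1)]"
      "mset X = mset (concat (take i bs)) + mset (take (i - 1) ts)"
      using P(2) by blast
    have "x \<in> set X"
      using arg_cong[OF X(2), of set_mset] \<open>1 \<le> prefix_count bs i x\<close>
        count_list_0_iff[of "concat (take i bs)" x] by (auto simp: prefix_count_def)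
    then obtain P0 Z where "X = P0 @ x # Z"
      by (meson split_list)
    moreover obtain A C where B: "bs ! i = A @ x # C"
      using dup by (meson O_duplicable_def split_list)
    ultimately have "(join_blocks ts bs, join_blocks ts (bs[i := A @ x # x # C])) \<in> eq_theory S"
      using eq_theory.sym[OF O_ids_collapse[OF O, of P0 x "Z @ [ts ! (i - 1)] @ A" "C @ post"]]
        P(1) join X(1) by simp
    then show ?thesis
      using B by (intro exI[of _ "A @ x # x # C"]) simp
  qed
qed

lemma O_duplicable_update:
  assumes i: "i < length bs" and B: "mset B = mset (bs ! i) + replicate_mset k x"
    and dup: "O_duplicable bs j y"
  shows "O_duplicable (bs[i := B]) j y"
proof -
  have "prefix_count bs j y \<le> prefix_count (bs[i := B]) j y"
    using prefix_count_update[OF i B, of j y] by simp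
  moreover have "y \<in> set (bs[i := B] ! j) \<and> count_list (bs ! j) y \<le> count_list (bs[i := B] ! j) y"
  proof (cases "j = i")
    case True
    then show ?thesis
      using dup arg_cong[OF B, of set_mset] count_list_eq_if_mset_eq_add[OF B, of y] i
      by (auto simp: O_duplicable_def)
  next
    case False
    then show ?thesis using dup by (simp add: O_duplicable_def)
  qed
  ultimately show ?thesis
    using dup unfolding O_duplicable_def by auto
qed

lemma O_ids_insert_power:
  assumes dec: "decomposition ts bs" and i: "i < length bs"
    and dup: "O_duplicable bs i x" and O: "O_ids \<subseteq> S"
  shows "\<exists>B. mset B = mset (bs ! i) + replicate_mset k x \<and>
             (join_blocks ts bs, join_blocks ts (bs[i := B])) \<in> eq_theory S"
proof (induction k)
  case 0
  show ?case
    by (intro exI[of _ "bs ! i"]) (simp add: eq_theory.refl)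
next
  case (Suc k)
  then obtain B1 where B1: "mset B1 = mset (bs ! i) + replicate_mset k x"
    "(join_blocks ts bs, join_blocks ts (bs[i := B1])) \<in> eq_theory S"
    by blast
  have "x \<in> set (concat bs)"
    using dup nth_mem[OF i] by (auto simp: O_duplicable_def)
  then have "decomposition ts (bs[i := B1])"
    by (rule decomposition_update[OF dec i _ B1(1)])
  moreover have "O_duplicable (bs[i := B1]) i x"
    by (rule O_duplicable_update[OF i B1(1) dup])
  ultimately obtain B2 where B2: "mset B2 = mset B1 + {#x#}"
    "(join_blocks ts (bs[i := B1]), join_blocks ts (bs[i := B2])) \<in> eq_theory S"
    using O_ids_insert[OF _ _ _ O, of "bs[i := B1]" ts i x] i by (auto simp: decomposition_def)
  then show ?case
    using B1 eq_theory.trans[OF B1(2) B2(2)] by (intro exI[of _ B2]) simp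
qed

lemma FE_related_insert:
  assumes rel: "FE_related bu bv" and i: "i < length bv"
    and before: "2 \<le> prefix_count bv i x" and after: "x \<in> set (concat (drop (Suc i) bv))"
  shows "FE_related bu (bv[i := x # bv ! i])"
  unfolding FE_related_def
proof (intro conjI allI impI)
  let ?bv = "bv[i := x # bv ! i]"
  have M: "mset (x # bv ! i) = mset (bv ! i) + replicate_mset 1 x"
    by simp
  show "length bu = length ?bv"
    using rel by (simp add: FE_related_def)
  fix z k
  assume k: "k \<le> length bu"
  have cp: "prefix_count ?bv k z = prefix_count bv k z + (if i < k \<and> z = x then 1 else 0)"
    by (rule prefix_count_update[OF i M])
  have total: "count_list (concat ?bv) z = count_list (concat bv) z + (if z = x then 1 else 0)"
    by (rule count_concat_update[OF i M])
  have "prefix_count bv (Suc i) x < count_list (concat bv) x"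
    using after unfolding in_concat_drop_iff .
  moreover have "2 \<le> prefix_count bv k x" if "i < k"
    using before prefix_count_mono[of i k bv x] that by simp
  moreover have "prefix_count bv k x \<le> prefix_count bv (Suc i) x" if "\<not> i < k"
    using prefix_count_mono[of k "Suc i" bv x] that by simp
  ultimately have "min 2 (prefix_count ?bv k z) = min 2 (prefix_count bv k z) \<and>
      (z \<in> set (concat (drop k ?bv)) \<longleftrightarrow> z \<in> set (concat (drop k bv)))"
    unfolding in_concat_drop_iff cp total by auto
  then show "min 2 (prefix_count bu k z) = min 2 (prefix_count ?bv k z)"
    "z \<in> set (concat (drop k bu)) \<longleftrightarrow> z \<in> set (concat (drop k ?bv))"
    using FE_related_D[OF rel k] by simp_all
qed

lemma eliminate_defects:
  assumes "I bu bv"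
    and step: "\<And>bu bv. I bu bv \<Longrightarrow> D bu bv \<noteq> {} \<Longrightarrow>
      \<exists>bu' bv'. I bu' bv' \<and> card (D bu' bv') < card (D bu bv) \<and>
                (f bu, f bu') \<in> eq_theory S \<and> (f bv, f bv') \<in> eq_theory S"
  shows "\<exists>bu' bv'. I bu' bv' \<and> D bu' bv' = {} \<and>
                   (f bu, f bu') \<in> eq_theory S \<and> (f bv, f bv') \<in> eq_theory S"
  using assms(1)
proof (induction "card (D bu bv)" arbitrary: bu bv rule: less_induct)
  case less
  show ?case
  proof (cases "D bu bv = {}")
    case True
    show ?thesis
      by (rule exI[of _ bu], rule exI[of _ bv]) (use True less.prems in \<open>simp add: eq_theory.refl\<close>)
  next
    case False
    then obtain bu1 bv1 where "I bu1 bv1" "card (D bu1 bv1) < card (D bu bv)"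
      "(f bu, f bu1) \<in> eq_theory S" "(f bv, f bv1) \<in> eq_theory S"
      using step[OF less.prems] by blast
    then show ?thesis
      using less.hyps by (meson eq_theory.trans)
  qed
qed

lemma content_diff_repair:
  assumes du: "decomposition ts bu" and dv: "decomposition ts bv" and rel: "FE_related bu bv"
    and i: "i < length bu" and xu: "x \<in> set (bu ! i)" and xv: "x \<notin> set (bv ! i)"
    and extra: "extra_id \<in> eq_theory S"
  shows "decomposition ts (bv[i := x # bv ! i])" "FE_related bu (bv[i := x # bv ! i])"
    and "content_diffs bu (bv[i := x # bv ! i]) = content_diffs bu bv - {(i, x)}"
    and "(join_blocks ts bv, join_blocks ts (bv[i := x # bv ! i])) \<in> eq_theory S"
proof -
  note diff = FE_related_content_diff[OF rel i xu xv]
  have iv: "i < length bv"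
    using rel i by (simp add: FE_related_def)
  have "x \<in> set (concat bv)"
    using diff(4) by (auto dest: in_set_dropD)
  then show "decomposition ts (bv[i := x # bv ! i])"
    using decomposition_update[OF dv iv, of x "x # bv ! i" 1] by simp
  show "FE_related bu (bv[i := x # bv ! i])"
    by (rule FE_related_insert[OF rel iv diff(2,4)])
  show "content_diffs bu (bv[i := x # bv ! i]) = content_diffs bu bv - {(i, x)}"
    by (rule content_diffs_insert[OF iv xu xv])
  show "(join_blocks ts bv, join_blocks ts (bv[i := x # bv ! i])) \<in> eq_theory S"
    by (rule extra_id_insert[OF dv iv diff(2,4) extra])
qed

lemma equalize_block_contents:
  assumes "decomposition ts bu" "decomposition ts bv" "FE_related bu bv" "extra_id \<in> eq_theory S"
  shows "\<exists>bu' bv'. (decomposition ts bu' \<and> decomposition ts bv' \<and> FE_related bu' bv') \<and>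
    content_diffs bu' bv' = {} \<and>
    (join_blocks ts bu, join_blocks ts bu') \<in> eq_theory S \<and>
    (join_blocks ts bv, join_blocks ts bv') \<in> eq_theory S"
proof (rule eliminate_defects[where I = "\<lambda>bu bv. decomposition ts bu \<and> decomposition ts bv \<and>
    FE_related bu bv"])
  show "decomposition ts bu \<and> decomposition ts bv \<and> FE_related bu bv"
    using assms by blast
  fix bu bv
  assume "decomposition ts bu \<and> decomposition ts bv \<and> FE_related bu bv"
  then have du: "decomposition ts bu" and dv: "decomposition ts bv" and rel: "FE_related bu bv"
    by blast+
  assume "content_diffs bu bv \<noteq> {}"
  then obtain i x where d: "(i, x) \<in> content_diffs bu bv"
    by auto
  then have i: "i < length bu" and diff: "(x \<in> set (bu ! i)) \<noteq> (x \<in> set (bv ! i))"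
    by (auto simp: content_diffs_def)
  have len: "length bu = length bv"
    using rel by (simp add: FE_related_def)
  have less: "card (content_diffs bu bv - {(i, x)}) < card (content_diffs bu bv)"
    using card_Diff1_less[OF finite_content_diffs d] .
  show "\<exists>bu' bv'. (decomposition ts bu' \<and> decomposition ts bv' \<and> FE_related bu' bv') \<and>
      card (content_diffs bu' bv') < card (content_diffs bu bv) \<and>
      (join_blocks ts bu, join_blocks ts bu') \<in> eq_theory S \<and>
      (join_blocks ts bv, join_blocks ts bv') \<in> eq_theory S"
  proof (cases "x \<in> set (bu ! i)")
    case True
    then have "x \<notin> set (bv ! i)"
      using diff by simp
    note repair = content_diff_repair[OF du dv rel i True this assms(4)]
    show ?thesis
      by (rule exI[of _ bu], rule exI[of _ "bv[i := x # bv ! i]"])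
        (use repair du less in \<open>simp add: eq_theory.refl\<close>)
  next
    case False
    let ?bu = "bu[i := x # bu ! i]"
    have "x \<in> set (bv ! i)" "i < length bv"
      using diff False i len by simp_all
    note repair = content_diff_repair[OF dv du FE_related_sym[OF rel] this(2,1) False assms(4)]
    have sym: "content_diffs bv ?bu = content_diffs ?bu bv" "content_diffs bv bu = content_diffs bu bv"
      using content_diffs_sym[of ?bu bv] content_diffs_sym[OF len] len by simp_all
    show ?thesis
      by (rule exI[of _ ?bu], rule exI[of _ bv])
        (use sym repair dv less FE_related_sym[of bv ?bu] in \<open>simp add: eq_theory.refl\<close>)
  qed
qed

definition count_diffs :: "'a list list \<Rightarrow> 'a list list \<Rightarrow> (nat \<times> 'a) set" where
  "count_diffs bu bv = {(i, x). i < length bu \<and> count_list (bu ! i) x \<noteq> count_list (bv ! i) x}"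

definition diffs_O_duplicable :: "'a list list \<Rightarrow> 'a list list \<Rightarrow> bool" where
  "diffs_O_duplicable bu bv \<longleftrightarrow> length bu = length bv \<and>
     (\<forall>(i, x) \<in> count_diffs bu bv. O_duplicable bu i x \<and> O_duplicable bv i x)"

lemma finite_count_diffs: "finite (count_diffs bu bv)"
proof (rule finite_subset)
  have "x \<in> set (bu ! i) \<union> set (bv ! i)"
    if "count_list (bu ! i) x \<noteq> count_list (bv ! i) x" for i x
    using that count_list_0_iff[of "bu ! i" x] count_list_0_iff[of "bv ! i" x] by auto
  then show "count_diffs bu bv \<subseteq> (SIGMA i:{..<length bu}. set (bu ! i) \<union> set (bv ! i))"
    by (auto simp: count_diffs_def)
qed auto

lemma count_diffs_sym: "length bu = length bv \<Longrightarrow> count_diffs bv bu = count_diffs bu bv"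
  by (auto simp: count_diffs_def)

lemma diffs_O_duplicable_sym: "diffs_O_duplicable bu bv \<Longrightarrow> diffs_O_duplicable bv bu"
  unfolding diffs_O_duplicable_def using count_diffs_sym by fastforce

lemma O_duplicable_if_FE_related:
  assumes rel: "FE_related bu bv" and i: "i < length bu"
    and same: "x \<in> set (bu ! i) \<longleftrightarrow> x \<in> set (bv ! i)"
    and ne: "count_list (bu ! i) x \<noteq> count_list (bv ! i) x"
  shows "O_duplicable bu i x"
proof (rule ccontr)
  assume not_dup: "\<not> O_duplicable bu i x"
  have "x \<in> set (bu ! i)"
    using same ne count_list_0_iff[of "bu ! i" x] count_list_0_iff[of "bv ! i" x] by auto
  then have once: "prefix_count bu i x = 0" "count_list (bu ! i) x = 1"
    using not_dup count_list_0_iff[of "bu ! i" x] by (auto simp: O_duplicable_def)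
  have "i < length bv"
    using rel i by (simp add: FE_related_def)
  then have "min 2 (prefix_count bv (Suc i) x) = min 2 (prefix_count bv i x + count_list (bv ! i) x)"
    by (simp add: prefix_count_Suc)
  moreover have "min 2 (prefix_count bu (Suc i) x) = 1"
    using once prefix_count_Suc[OF i, of x] by simp
  ultimately have "count_list (bv ! i) x = 1"
    using FE_related_D(1)[OF rel, of i x] FE_related_D(1)[OF rel, of "Suc i" x] i once by simp
  then show False
    using ne once by simp
qed

lemma diffs_O_duplicable_if_FE_related:
  assumes rel: "FE_related bu bv" and "content_diffs bu bv = {}"
  shows "diffs_O_duplicable bu bv"
proof -
  have len: "length bu = length bv"
    using rel by (simp add: FE_related_def)
  have "x \<in> set (bu ! i) \<longleftrightarrow> x \<in> set (bv ! i)" if "i < length bu" for i x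
    using assms(2) that by (auto simp: content_diffs_def)
  then show ?thesis
    using O_duplicable_if_FE_related[OF rel] O_duplicable_if_FE_related[OF FE_related_sym[OF rel]] len
    by (auto simp: diffs_O_duplicable_def count_diffs_def)
qed

lemma count_diffs_raise:
  assumes du: "decomposition ts bu" and dup: "diffs_O_duplicable bu bv"
    and d: "(i, x) \<in> count_diffs bu bv" and lt: "count_list (bu ! i) x < count_list (bv ! i) x"
    and O: "O_ids \<subseteq> S"
  shows "\<exists>bu'. decomposition ts bu' \<and> diffs_O_duplicable bu' bv \<and>
    count_diffs bu' bv = count_diffs bu bv - {(i, x)} \<and>
    (join_blocks ts bu, join_blocks ts bu') \<in> eq_theory S"
proof -
  let ?k = "count_list (bv ! i) x - count_list (bu ! i) x"
  have i: "i < length bu"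
    using d by (simp add: count_diffs_def)
  have dup_x: "O_duplicable bu i x"
    using dup d by (auto simp: diffs_O_duplicable_def)
  obtain B where B: "mset B = mset (bu ! i) + replicate_mset ?k x"
    "(join_blocks ts bu, join_blocks ts (bu[i := B])) \<in> eq_theory S"
    using O_ids_insert_power[OF du i dup_x O] by blast
  let ?bu = "bu[i := B]"
  have "x \<in> set (concat bu)"
    using dup_x nth_mem[OF i] by (auto simp: O_duplicable_def)
  then have "decomposition ts ?bu"
    by (rule decomposition_update[OF du i _ B(1)])
  moreover have count: "count_list (?bu ! j) y = (if (j, y) = (i, x) then count_list (bv ! i) x
      else count_list (bu ! j) y)" for j y
    using count_list_eq_if_mset_eq_add[OF B(1), of y] i lt by (auto simp: nth_list_update)
  then have diffs: "count_diffs ?bu bv = count_diffs bu bv - {(i, x)}"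
    by (auto simp: count_diffs_def)
  moreover have "diffs_O_duplicable ?bu bv"
    using dup diffs O_duplicable_update[OF i B(1)] by (auto simp: diffs_O_duplicable_def)
  ultimately show ?thesis
    using B(2) by blast
qed

lemma equalize_block_multiplicities:
  assumes "decomposition ts bu" "decomposition ts bv" "diffs_O_duplicable bu bv" "O_ids \<subseteq> S"
  shows "\<exists>bu' bv'. (decomposition ts bu' \<and> decomposition ts bv' \<and> diffs_O_duplicable bu' bv') \<and>
    count_diffs bu' bv' = {} \<and>
    (join_blocks ts bu, join_blocks ts bu') \<in> eq_theory S \<and>
    (join_blocks ts bv, join_blocks ts bv') \<in> eq_theory S"
proof (rule eliminate_defects[where I = "\<lambda>bu bv. decomposition ts bu \<and> decomposition ts bv \<and>
    diffs_O_duplicable bu bv"])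
  show "decomposition ts bu \<and> decomposition ts bv \<and> diffs_O_duplicable bu bv"
    using assms by blast
  fix bu bv
  assume inv: "decomposition ts bu \<and> decomposition ts bv \<and> diffs_O_duplicable bu bv"
    and "count_diffs bu bv \<noteq> {}"
  then obtain i x where d: "(i, x) \<in> count_diffs bu bv"
    by auto
  have du: "decomposition ts bu" and dv: "decomposition ts bv" and dup: "diffs_O_duplicable bu bv"
    using inv by blast+
  have len: "length bu = length bv"
    using dup by (simp add: diffs_O_duplicable_def)
  have less: "card (count_diffs bu bv - {(i, x)}) < card (count_diffs bu bv)"
    using card_Diff1_less[OF finite_count_diffs d] .
  show "\<exists>bu' bv'. (decomposition ts bu' \<and> decomposition ts bv' \<and> diffs_O_duplicable bu' bv') \<and>
      card (count_diffs bu' bv') < card (count_diffs bu bv) \<and>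
      (join_blocks ts bu, join_blocks ts bu') \<in> eq_theory S \<and>
      (join_blocks ts bv, join_blocks ts bv') \<in> eq_theory S"
  proof (cases "count_list (bu ! i) x < count_list (bv ! i) x")
    case True
    then show ?thesis
      using count_diffs_raise[OF du dup d True assms(4)] dv less
      by (metis eq_theory.refl)
  next
    case False
    then have "count_list (bv ! i) x < count_list (bu ! i) x"
      using d by (simp add: count_diffs_def)
    moreover have "(i, x) \<in> count_diffs bv bu"
      using d count_diffs_sym[OF len] by simp
    ultimately obtain bv' where bv': "decomposition ts bv'" "diffs_O_duplicable bv' bu"
      "count_diffs bv' bu = count_diffs bu bv - {(i, x)}"
      "(join_blocks ts bv, join_blocks ts bv') \<in> eq_theory S"
      using count_diffs_raise[OF dv diffs_O_duplicable_sym[OF dup] _ _ assms(4)]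
        count_diffs_sym[OF len] by metis
    moreover have "count_diffs bu bv' = count_diffs bv' bu"
      using bv'(2) by (intro count_diffs_sym) (simp add: diffs_O_duplicable_def)
    ultimately have "diffs_O_duplicable bu bv' \<and> card (count_diffs bu bv') < card (count_diffs bu bv)"
      using less diffs_O_duplicable_sym by simp
    then show ?thesis
      using du bv'(1,4) eq_theory.refl by blast
  qed
qed

lemma well_balanced_equivalents:
  assumes du: "decomposition ts bu" and dv: "decomposition ts bv" and rel: "FE_related bu bv"
    and "content_diffs bu bv = {}" and "O_ids \<subseteq> S"
  shows "\<exists>u' v'. well_balanced u' v' \<and>
    (join_blocks ts bu, u') \<in> eq_theory S \<and> (join_blocks ts bv, v') \<in> eq_theory S"
proof -
  have "diffs_O_duplicable bu bv"
    using diffs_O_duplicable_if_FE_related[OF rel assms(4)] .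
  then obtain bu' bv' where "decomposition ts bu'" "decomposition ts bv'" "count_diffs bu' bv' = {}"
    "(join_blocks ts bu, join_blocks ts bu') \<in> eq_theory S"
    "(join_blocks ts bv, join_blocks ts bv') \<in> eq_theory S"
    using equalize_block_multiplicities[OF du dv _ assms(5)] by blast
  moreover have "\<forall>i<length bu'. mset (bu' ! i) = mset (bv' ! i)"
    using calculation(3) by (auto simp: count_diffs_def multiset_eq_iff count_mset)
  ultimately show ?thesis
    using well_balanced_join_blocks by blast
qed

lemma well_balanced_equivalents_extra_id:
  assumes du: "decomposition ts bu" and dv: "decomposition ts bv" and rel: "FE_related bu bv"
    and "O_ids \<subseteq> S" "extra_id \<in> eq_theory S"
  shows "\<exists>u' v'. well_balanced u' v' \<and>
    (join_blocks ts bu, u') \<in> eq_theory S \<and> (join_blocks ts bv, v') \<in> eq_theory S"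
proof -
  obtain bu' bv' where B: "decomposition ts bu'" "decomposition ts bv'" "FE_related bu' bv'"
    "content_diffs bu' bv' = {}" "(join_blocks ts bu, join_blocks ts bu') \<in> eq_theory S"
    "(join_blocks ts bv, join_blocks ts bv') \<in> eq_theory S"
    using equalize_block_contents[OF du dv rel assms(5)] by blast
  then show ?thesis
    using well_balanced_equivalents[OF B(1-4) assms(4)] by (blast intro: eq_theory.trans)
qed

lemma O_sub_eq_if_equivalent:
  assumes "(u, u') \<in> eq_theory (O_ids \<union> X)" "(v, v') \<in> eq_theory (O_ids \<union> X)"
    and "X \<subseteq> O_sub {(u, v)}"
  shows "O_sub {(u, v)} = O_sub ({(u', v')} \<union> X)"
proof
  have "eq_theory (O_ids \<union> X) \<subseteq> O_sub ({(u', v')} \<union> X)"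
    unfolding O_sub_def by (rule eq_theory_mono) blast
  then have "(u, v) \<in> O_sub ({(u', v')} \<union> X)"
    using assms(1,2) eq_theory_trans_sym[of u u' _ v v'] unfolding O_sub_def
    by (blast intro: eq_theory.ax)
  then show "O_sub {(u, v)} \<subseteq> O_sub ({(u', v')} \<union> X)"
    unfolding O_sub_def by (intro eq_theory_subset) (auto intro: eq_theory.ax)
next
  have "eq_theory (O_ids \<union> X) \<subseteq> O_sub {(u, v)}"
    using assms(3) unfolding O_sub_def by (intro eq_theory_subset) (auto intro: eq_theory.ax)
  then have "(u', v') \<in> O_sub {(u, v)}"
    using assms(1,2) eq_theory_trans_sym[of u' u _ v' v] unfolding O_sub_def
    by (blast intro: eq_theory.ax eq_theory.sym)
  then show "O_sub ({(u', v')} \<union> X) \<subseteq> O_sub {(u, v)}"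
    using assms(3) unfolding O_sub_def by (intro eq_theory_subset) (auto intro: eq_theory.ax)
qed

theorem lemma3p5:
  fixes u v :: word
  assumes "holds_in_FE (u, v)"
  shows "\<exists>u' v'. well_balanced u' v' \<and>
           (O_sub {(u, v)} = O_sub {(u', v')} \<or>
            O_sub {(u, v)} = O_sub {(u', v'), extra_id})"
proof -
  let ?ts = "simple_letters u" and ?bu = "blocks u" and ?bv = "blocks v"
  have dec: "decomposition ?ts ?bu" "decomposition ?ts ?bv"
    and join: "join_blocks ?ts ?bu = u" "join_blocks ?ts ?bv = v"
    using decomposition_of_word[of u] decomposition_of_word[of v]
      simple_letters_eq_if_holds_in_FE[OF assms] by simp_all
  have rel: "FE_related ?bu ?bv"
    using FE_related_if_holds_in_FE[OF _ dec] assms join by simp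
  show ?thesis
  proof (cases "content_diffs ?bu ?bv = {}")
    case True
    then obtain u' v' where "well_balanced u' v'"
      "(u, u') \<in> eq_theory (O_ids \<union> {})" "(v, v') \<in> eq_theory (O_ids \<union> {})"
      using well_balanced_equivalents[OF dec rel, of "O_ids \<union> {}"] join by auto
    then show ?thesis
      using O_sub_eq_if_equivalent[of u u' "{}" v v'] by auto
  next
    case False
    then have extra: "extra_id \<in> O_sub {(u, v)}"
      using extra_id_if_content_diff[OF dec rel] join by simp
    obtain u' v' where "well_balanced u' v'"
      "(u, u') \<in> eq_theory (O_ids \<union> {extra_id})" "(v, v') \<in> eq_theory (O_ids \<union> {extra_id})"
      using well_balanced_equivalents_extra_id[OF dec rel, of "O_ids \<union> {extra_id}"] join
      by (auto intro: eq_theory.ax)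
    moreover have "O_sub {(u, v)} = O_sub ({(u', v')} \<union> {extra_id})"
      using O_sub_eq_if_equivalent[of u u' "{extra_id}" v v'] extra calculation(2,3) by blast
    ultimately show ?thesis
      unfolding Un_insert_left Un_empty_left by blast
  qed
qed

end
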